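(* Let $U_n\subset C^n([a,b],\mathbb{K})$ ($\mathbb{K}=\mathbb{R}$ or $\mathbb{C}$, $a\ne b$) be a subspace of dimension $n+1$ possessing a Bernstein basis $p_{n,0},\dots,p_{n,n}$ for $\{a,b\}$ that is locally non-negative at $\{a,b\}$. Let $f_0\in U_n$ be strictly positive and assume that $D_{f_0}U_n$ possesses a Bernstein basis $q_{n-1,0},\dots,q_{n-1,n-1}$ for $\{a,b\}$ that is locally non-negative at $\{a,b\}$. Then the coefficients $\beta_0,\dots,\beta_n$ in the expansion $f_0=\sum_{k=0}^n\beta_kp_{n,k}$ are all positive.
   Context: A function $f\in C^m([a,b],\mathbb{K})$ has a zero of order $k$ at $c$ if $f(c)=\dots=f^{(k-1)}(c)=0$ and $f^{(k)}(c)\ne0$ (one-sided derivatives at endpoints). For an $(m+1)$-dimensional space $V\subset C^m([a,b],\mathbb{K})$, a Bernstein basis for $\{a,b\}$ is a system $p_{m,0},\dots,p_{m,m}$ in $V$ such that each $p_{m,k}$ has a zero of order exactly $k$ at $a$ and of order exactly $m-k$ at $b$. It is locally non-negative at $\{a,b\}$ if its functions are real-valued and there is $\delta>0$ with $p_{m,k}(x)\ge0$ for all $k$ and all $x\in[a,a+\delta)\cup(b-\delta,b]$. For strictly positive (real-valued, $>0$ on $[a,b]$) $f_0\in U_n$, $D_{f_0}U_n:=\{\frac{d}{dx}(f/f_0):f\in U_n\}$. *)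

theory Defs
  imports "HOL-Analysis.Analysis"
begin

text \<open>Scalars: the field K is modelled by a type of class real_normed_field
  (in practice real or complex).  Functions on [a,b] are functions real => K
  whose values outside [a,b] are irrelevant; all derivatives are taken within
  {a..b}, so at the endpoints they are the one-sided derivatives.\<close>

primrec hder :: "real \<Rightarrow> real \<Rightarrow> nat \<Rightarrow> (real \<Rightarrow> 'a::real_normed_vector) \<Rightarrow> real \<Rightarrow> 'a" where
  "hder a b 0 f = f"
| "hder a b (Suc k) f = (\<lambda>x. vector_derivative (hder a b k f) (at x within {a..b}))"

definition Cm_on :: "nat \<Rightarrow> real \<Rightarrow> real \<Rightarrow> (real \<Rightarrow> 'a::real_normed_vector) \<Rightarrow> bool" where
  "Cm_on m a b f \<longleftrightarrow>
     (\<forall>k\<le>m. continuous_on {a..b} (hder a b k f)) \<and>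
     (\<forall>k<m. \<forall>x\<in>{a..b}. (hder a b k f has_vector_derivative hder a b (Suc k) f x) (at x within {a..b}))"

definition zero_order :: "real \<Rightarrow> real \<Rightarrow> (real \<Rightarrow> 'a::real_normed_vector) \<Rightarrow> real \<Rightarrow> nat \<Rightarrow> bool" where
  "zero_order a b f c k \<longleftrightarrow> (\<forall>j<k. hder a b j f c = 0) \<and> hder a b k f c \<noteq> 0"

text \<open>V is a K-linear subspace of C^m([a,b],K) of dimension m+1 (functions are
  identified when they agree on [a,b]): it has m+1 elements that are linearly
  independent on [a,b] and span V on [a,b].\<close>
definition Cm_subspace_dim :: "nat \<Rightarrow> real \<Rightarrow> real \<Rightarrow> (real \<Rightarrow> 'a::real_normed_field) set \<Rightarrow> bool" where
  "Cm_subspace_dim m a b V \<longleftrightarrow>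
     (\<lambda>x. 0) \<in> V \<and>
     (\<forall>f\<in>V. \<forall>g\<in>V. (\<lambda>x. f x + g x) \<in> V) \<and>
     (\<forall>c. \<forall>f\<in>V. (\<lambda>x. c * f x) \<in> V) \<and>
     (\<forall>f\<in>V. Cm_on m a b f) \<and>
     (\<exists>e :: nat \<Rightarrow> real \<Rightarrow> 'a.
        (\<forall>k\<le>m. e k \<in> V) \<and>
        (\<forall>c. (\<forall>x\<in>{a..b}. (\<Sum>k\<le>m. c k * e k x) = 0) \<longrightarrow> (\<forall>k\<le>m. c k = 0)) \<and>
        (\<forall>f\<in>V. \<exists>c. \<forall>x\<in>{a..b}. f x = (\<Sum>k\<le>m. c k * e k x)))"

definition bernstein_basis :: "nat \<Rightarrow> real \<Rightarrow> real \<Rightarrow> (real \<Rightarrow> 'a::real_normed_field) set \<Rightarrow> (nat \<Rightarrow> real \<Rightarrow> 'a) \<Rightarrow> bool" where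
  "bernstein_basis m a b V p \<longleftrightarrow>
     (\<forall>k\<le>m. p k \<in> V \<and> zero_order a b (p k) a k \<and> zero_order a b (p k) b (m - k))"

definition loc_nonneg :: "nat \<Rightarrow> real \<Rightarrow> real \<Rightarrow> (nat \<Rightarrow> real \<Rightarrow> 'a::real_normed_field) \<Rightarrow> bool" where
  "loc_nonneg m a b p \<longleftrightarrow>
     (\<forall>k\<le>m. \<forall>x\<in>{a..b}. p k x \<in> \<real>) \<and>
     (\<exists>\<delta>>0. \<forall>k\<le>m. \<forall>x\<in>{a..b}. (x < a + \<delta> \<or> b - \<delta> < x) \<longrightarrow> (\<exists>r\<ge>0. p k x = of_real r))"

definition Dquot :: "real \<Rightarrow> real \<Rightarrow> (real \<Rightarrow> 'a::real_normed_field) \<Rightarrow> (real \<Rightarrow> 'a) set \<Rightarrow> (real \<Rightarrow> 'a) set" where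
  "Dquot a b f0 U = {hder a b 1 (\<lambda>x. f x / f0 x) | f. f \<in> U}"

end

theory Submission
  imports Defs "HOL-Library.Function_Algebras"
begin

text \<open>Since \<Sum>k \<beta>_k p_k / f0 = 1, differentiating gives \<Sum>k \<beta>_k (p_k / f0)' = 0.
  Each (p_k / f0)' lies in D_{f0} U_n and has zeros of orders k - 1 at a and n - k - 1 at b,
  so in the Bernstein basis q it is c_k q_{k-1} + d_k q_k. At an endpoint, the first
  non-vanishing derivative of a locally non-negative function has a sign fixed by Taylor's
  formula; comparing these derivatives at a and at b gives c_k > 0 and d_k < 0.
  The coefficient of q_j in \<Sum>k \<beta>_k (p_k / f0)' = 0 is \<beta>_j d_j + \<beta>_{j+1} c_{j+1} = 0,
  and \<beta>_0 = f0(a) / p_0(a) > 0, so all \<beta>_k are positive by induction.\<close>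

lemma sum_fun_apply: "finite A \<Longrightarrow> (\<Sum>i\<in>A. f i) x = (\<Sum>i\<in>A. f i x)"
  by (induction A rule: finite_induct) auto

lemma sum_eq_single:
  assumes "finite A" "j \<in> A" "\<And>l. l \<in> A \<Longrightarrow> l \<noteq> j \<Longrightarrow> g l = 0"
  shows "sum g A = g j"
proof -
  have "sum g (A - {j}) = 0"
    using assms(3) by (intro sum.neutral) auto
  then show ?thesis
    using sum.remove[OF assms(1,2), of g] by simp
qed

lemma inj_on_diff_atMost: "inj_on (\<lambda>j. m - j) {..m::nat}"
  by (auto simp: inj_on_def)

lemma mult_of_real_eq_of_real_iff:
  "r \<noteq> 0 \<Longrightarrow> z * of_real r = (of_real t :: 'a::real_normed_field) \<longleftrightarrow> z = of_real (t / r)"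
  by (auto simp: of_real_divide field_simps)

section \<open>Derivatives on a closed interval\<close>

lemma vector_derivative_within_atLeastAtMost:
  assumes "a < b" "x \<in> {a..b}" "(f has_vector_derivative D) (at x within {a..b})"
  shows "vector_derivative f (at x within {a..b}) = D"
  using vector_derivative_within_cbox[of a b x f D] assms by simp

text \<open>Keeps first derivatives written as hder a b 1 f instead of unfolding them.\<close>
declare hder.simps(2) [simp del] One_nat_def [simp del]

lemma hder_Suc_inner: "hder a b (Suc k) f = hder a b k (hder a b 1 f)"
  by (induction k) (simp_all add: hder.simps(2) One_nat_def)

lemma hder_cong_on:
  assumes "\<forall>x\<in>{a..b}. f x = g x" "x \<in> {a..b}"
  shows "hder a b k f x = hder a b k g x"
  using assms(2)
proof (induction k arbitrary: x)
  case (Suc k)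
  then show ?case
    by (simp add: hder.simps(2), intro vector_derivative_cong_eq always_eventually) auto
qed (use assms(1) in simp)

lemma Cm_on_hder_eqI:
  assumes ab: "a < b"
    and G0: "\<forall>x\<in>{a..b}. G 0 x = f x"
    and G_cont: "\<forall>k\<le>m. continuous_on {a..b} (G k)"
    and G_deriv: "\<forall>k<m. \<forall>x\<in>{a..b}. (G k has_vector_derivative G (Suc k) x) (at x within {a..b})"
  shows "Cm_on m a b f \<and> (\<forall>k\<le>m. \<forall>x\<in>{a..b}. hder a b k f x = G k x)"
proof -
  have hder_eq: "\<forall>x\<in>{a..b}. hder a b k f x = G k x" if "k \<le> m" for k
    using that
  proof (induction k)
    case (Suc k)
    show ?case
    proof
      fix x assume x: "x \<in> {a..b}"
      have "(hder a b k f has_vector_derivative G (Suc k) x) (at x within {a..b})"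
        using has_vector_derivative_transform[OF x _ G_deriv[rule_format, of k x]] Suc x by auto
      then show "hder a b (Suc k) f x = G (Suc k) x"
        using vector_derivative_within_atLeastAtMost[OF ab x] by (simp add: hder.simps(2))
    qed
  qed (use G0 in simp)
  have "continuous_on {a..b} (hder a b k f)" if "k \<le> m" for k
    using continuous_on_eq[OF G_cont[rule_format, OF that]] hder_eq[OF that] by simp
  moreover have "(hder a b k f has_vector_derivative hder a b (Suc k) f x) (at x within {a..b})"
    if "k < m" "x \<in> {a..b}" for k x
  proof -
    have "(hder a b k f has_vector_derivative G (Suc k) x) (at x within {a..b})"
      using has_vector_derivative_transform[OF that(2) _ G_deriv[rule_format, OF that]] hder_eq that
      by auto
    then show ?thesis
      using hder_eq[of "Suc k"] that by simp
  qed
  ultimately show ?thesis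
    using hder_eq unfolding Cm_on_def by blast
qed

lemma Cm_on_mono: "Cm_on m a b f \<Longrightarrow> k \<le> m \<Longrightarrow> Cm_on k a b f"
  unfolding Cm_on_def by auto

lemma Cm_on_hder1: "Cm_on (Suc m) a b f \<Longrightarrow> Cm_on m a b (hder a b 1 f)"
  unfolding Cm_on_def hder_Suc_inner[symmetric] by auto

lemma Cm_on_has_vector_derivative:
  assumes "Cm_on (Suc m) a b f" "x \<in> {a..b}"
  shows "(f has_vector_derivative hder a b 1 f x) (at x within {a..b})"
  using assms unfolding Cm_on_def by (metis hder.simps(1) zero_less_Suc One_nat_def)

lemma Cm_on_SucI:
  assumes ab: "a < b" and "continuous_on {a..b} f"
    and f': "\<forall>x\<in>{a..b}. (f has_vector_derivative g x) (at x within {a..b})"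
    and g: "Cm_on m a b g"
  shows "Cm_on (Suc m) a b f"
proof -
  let ?G = "\<lambda>k. if k = 0 then f else hder a b (k - 1) g"
  have "Cm_on (Suc m) a b f \<and> (\<forall>k\<le>Suc m. \<forall>x\<in>{a..b}. hder a b k f x = ?G k x)"
  proof (rule Cm_on_hder_eqI[OF ab])
    show "\<forall>k\<le>Suc m. continuous_on {a..b} (?G k)"
      using assms(2) g unfolding Cm_on_def by auto
    show "\<forall>k<Suc m. \<forall>x\<in>{a..b}. (?G k has_vector_derivative ?G (Suc k) x) (at x within {a..b})"
      using f' g unfolding Cm_on_def by (auto simp: less_Suc_eq_0_disj)
  qed simp
  then show ?thesis by blast
qed

lemma Cm_on_const:
  assumes "a < b"
  shows "Cm_on m a b (\<lambda>x. c) \<and> (\<forall>k\<le>m. \<forall>x\<in>{a..b}. hder a b k (\<lambda>x. c) x = (if k = 0 then c else 0))"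
  by (rule Cm_on_hder_eqI[OF assms]) auto

lemma Cm_on_sum:
  fixes f :: "nat \<Rightarrow> real \<Rightarrow> 'a::real_normed_field"
  assumes ab: "a < b" and "finite A" and f: "\<forall>i\<in>A. Cm_on m a b (f i)"
  shows "Cm_on m a b (\<lambda>x. \<Sum>i\<in>A. c i * f i x) \<and>
    (\<forall>k\<le>m. \<forall>x\<in>{a..b}. hder a b k (\<lambda>x. \<Sum>i\<in>A. c i * f i x) x = (\<Sum>i\<in>A. c i * hder a b k (f i) x))"
  by (rule Cm_on_hder_eqI[OF ab])
    (use f in \<open>auto simp: Cm_on_def intro!: continuous_intros derivative_intros\<close>)

lemma Cm_on_add:
  fixes f g :: "real \<Rightarrow> 'a::real_normed_field"
  assumes ab: "a < b" and f: "Cm_on m a b f" and g: "Cm_on m a b g"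
  shows "Cm_on m a b (\<lambda>x. f x + g x) \<and>
    (\<forall>k\<le>m. \<forall>x\<in>{a..b}. hder a b k (\<lambda>x. f x + g x) x = hder a b k f x + hder a b k g x)"
  by (rule Cm_on_hder_eqI[OF ab])
    (use f g in \<open>auto simp: Cm_on_def intro!: continuous_intros derivative_intros\<close>)

lemma Cm_on_mult:
  fixes f g :: "real \<Rightarrow> 'a::real_normed_field"
  assumes ab: "a < b"
  shows "Cm_on m a b f \<Longrightarrow> Cm_on m a b g \<Longrightarrow> Cm_on m a b (\<lambda>x. f x * g x)"
proof (induction m arbitrary: f g)
  case 0
  then show ?case unfolding Cm_on_def by (auto intro!: continuous_intros)
next
  case (Suc m)
  have "Cm_on m a b (\<lambda>x. f x * hder a b 1 g x)"
    by (rule Suc.IH[OF Cm_on_mono[OF Suc.prems(1)] Cm_on_hder1[OF Suc.prems(2)]]) simp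
  moreover have "Cm_on m a b (\<lambda>x. hder a b 1 f x * g x)"
    by (rule Suc.IH[OF Cm_on_hder1[OF Suc.prems(1)] Cm_on_mono[OF Suc.prems(2)]]) simp
  ultimately have "Cm_on m a b (\<lambda>x. f x * hder a b 1 g x + hder a b 1 f x * g x)"
    using Cm_on_add[OF ab] by blast
  moreover have "continuous_on {a..b} (\<lambda>x. f x * g x)"
    using Suc.prems unfolding Cm_on_def by (auto intro!: continuous_intros)
  moreover have "\<forall>x\<in>{a..b}. ((\<lambda>x. f x * g x) has_vector_derivative
      (f x * hder a b 1 g x + hder a b 1 f x * g x)) (at x within {a..b})"
    using Cm_on_has_vector_derivative[OF Suc.prems(1)] Cm_on_has_vector_derivative[OF Suc.prems(2)]
    by (auto intro!: has_vector_derivative_mult)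
  ultimately show ?case
    by (intro Cm_on_SucI[OF ab]) auto
qed

lemma hder1_mult:
  fixes f g :: "real \<Rightarrow> 'a::real_normed_field"
  assumes ab: "a < b" and "Cm_on (Suc m) a b f" "Cm_on (Suc m) a b g" "x \<in> {a..b}"
  shows "hder a b 1 (\<lambda>x. f x * g x) x = hder a b 1 f x * g x + f x * hder a b 1 g x"
proof -
  have "((\<lambda>x. f x * g x) has_vector_derivative
        (f x * hder a b 1 g x + hder a b 1 f x * g x)) (at x within {a..b})"
    using Cm_on_has_vector_derivative[OF assms(2,4)] Cm_on_has_vector_derivative[OF assms(3,4)]
    by (intro has_vector_derivative_mult)
  then show ?thesis
    using vector_derivative_within_atLeastAtMost[OF ab assms(4)]
    by (simp add: hder.simps(2) One_nat_def add.commute)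
qed

lemma Cm_on_inverse:
  fixes f :: "real \<Rightarrow> 'a::real_normed_field"
  assumes ab: "a < b" and f: "Cm_on m a b f" and nz: "\<forall>x\<in>{a..b}. f x \<noteq> 0"
  shows "Cm_on m a b (\<lambda>x. inverse (f x))"
proof -
  have "Cm_on k a b (\<lambda>x. inverse (f x))" if "k \<le> m" for k
    using that
  proof (induction k)
    case 0
    then show ?case using f nz unfolding Cm_on_def by (auto intro!: continuous_on_inverse)
  next
    case (Suc k)
    have f_Suc: "Cm_on (Suc k) a b f" using Cm_on_mono[OF f Suc.prems] .
    have IH: "Cm_on k a b (\<lambda>x. inverse (f x))" using Suc by simp
    let ?g = "\<lambda>x. - 1 * (inverse (f x) * (hder a b 1 f x * inverse (f x)))"
    have "Cm_on k a b ?g"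
      using Cm_on_mult[OF ab, of k] Cm_on_const[OF ab, of k] IH Cm_on_hder1[OF f_Suc] by blast
    moreover have "continuous_on {a..b} (\<lambda>x. inverse (f x))"
      using IH unfolding Cm_on_def by auto
    moreover have "((\<lambda>x. inverse (f x)) has_vector_derivative ?g x) (at x within {a..b})"
      if x: "x \<in> {a..b}" for x
    proof -
      have f': "(f has_derivative (\<lambda>h. h *\<^sub>R hder a b 1 f x)) (at x within {a..b})"
        using Cm_on_has_vector_derivative[OF f_Suc x] by (simp add: has_vector_derivative_def)
      have "((\<lambda>x. inverse (f x)) has_derivative
          (\<lambda>h. - (inverse (f x) * (h *\<^sub>R hder a b 1 f x) * inverse (f x)))) (at x within {a..b})"
        by (rule Deriv.has_derivative_inverse[OF _ f']) (use nz x in auto)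
      then show ?thesis
        by (simp add: has_vector_derivative_def mult.assoc)
    qed
    ultimately show ?case
      by (intro Cm_on_SucI[OF ab]) auto
  qed
  then show ?thesis by simp
qed

lemma Cm_on_divide:
  fixes f g :: "real \<Rightarrow> 'a::real_normed_field"
  assumes ab: "a < b" and "Cm_on m a b g" "Cm_on m a b f" "\<forall>x\<in>{a..b}. f x \<noteq> 0"
  shows "Cm_on m a b (\<lambda>x. g x / f x)"
  using Cm_on_mult[OF ab assms(2) Cm_on_inverse[OF ab assms(3,4)]] by (simp add: divide_inverse)

section \<open>Zeros of finite order\<close>

lemma hder_mult_at_zero:
  fixes f g :: "real \<Rightarrow> 'a::real_normed_field"
  assumes ab: "a < b"
  shows "Cm_on m a b f \<Longrightarrow> Cm_on m a b g \<Longrightarrow> k \<le> m \<Longrightarrow> c \<in> {a..b} \<Longrightarrow> \<forall>j<k. hder a b j f c = 0 \<Longrightarrow>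
    (\<forall>j<k. hder a b j (\<lambda>x. f x * g x) c = 0) \<and> hder a b k (\<lambda>x. f x * g x) c = hder a b k f c * g c"
proof (induction m arbitrary: f g k)
  case (Suc m)
  show ?case
  proof (cases k)
    case (Suc k')
    let ?F1 = "\<lambda>x. hder a b 1 f x * g x" and ?F2 = "\<lambda>x. f x * hder a b 1 g x"
    have f1: "Cm_on m a b (hder a b 1 f)" and g1: "Cm_on m a b (hder a b 1 g)"
      using Cm_on_hder1 Suc.prems(1,2) by blast+
    have f: "Cm_on m a b f" and g: "Cm_on m a b g"
      using Cm_on_mono Suc.prems(1,2) by fastforce+
    have k': "k' \<le> m" using Suc.prems(3) \<open>k = Suc k'\<close> by simp
    have c: "c \<in> {a..b}" by (fact Suc.prems(4))
    have IH1: "(\<forall>j<k'. hder a b j ?F1 c = 0) \<and> hder a b k' ?F1 c = hder a b k f c * g c"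
      using Suc.IH[OF f1 g k' c] Suc.prems(5) \<open>k = Suc k'\<close> by (simp add: hder_Suc_inner[symmetric])
    have IH2: "(\<forall>j<k'. hder a b j ?F2 c = 0) \<and> hder a b k' ?F2 c = 0"
      using Suc.IH[OF f g1 k' c] Suc.prems(5) \<open>k = Suc k'\<close> by auto
    have product_rule: "hder a b (Suc j) (\<lambda>x. f x * g x) c = hder a b j ?F1 c + hder a b j ?F2 c"
      if "j \<le> m" for j
    proof -
      have "hder a b (Suc j) (\<lambda>x. f x * g x) c = hder a b j (\<lambda>x. ?F1 x + ?F2 x) c"
        unfolding hder_Suc_inner
        by (rule hder_cong_on[OF _ c]) (use hder1_mult[OF ab Suc.prems(1,2)] in auto)
      also have "\<dots> = hder a b j ?F1 c + hder a b j ?F2 c"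
        using Cm_on_add[OF ab Cm_on_mult[OF ab f1 g] Cm_on_mult[OF ab f g1]] that c by blast
      finally show ?thesis .
    qed
    have "hder a b j (\<lambda>x. f x * g x) c = 0" if "j < k" for j
    proof (cases j)
      case 0
      then show ?thesis using Suc.prems(5) that by auto
    next
      case (Suc j')
      then show ?thesis using product_rule[of j'] IH1 IH2 that \<open>k = Suc k'\<close> k' by auto
    qed
    then show ?thesis
      using product_rule[OF k'] IH1 IH2 \<open>k = Suc k'\<close> by simp
  qed simp
qed simp

lemma hder_divide_at_zero_order:
  fixes p f :: "real \<Rightarrow> 'a::real_normed_field"
  assumes ab: "a < b" and p: "Cm_on m a b p" and f: "Cm_on m a b f"
    and nz: "\<forall>x\<in>{a..b}. f x \<noteq> 0" and km: "k \<le> m" and c: "c \<in> {a..b}"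
    and zo: "zero_order a b p c k"
  shows "(\<forall>j<k. hder a b j (\<lambda>x. p x / f x) c = 0) \<and>
    hder a b k (\<lambda>x. p x / f x) c = hder a b k p c / f c"
proof -
  define r where "r = (\<lambda>x. p x / f x)"
  have r: "Cm_on m a b r" unfolding r_def by (rule Cm_on_divide[OF ab p f nz])
  have p_eq: "hder a b j (\<lambda>x. r x * f x) c = hder a b j p c" for j
    by (rule hder_cong_on[OF _ c]) (use nz in \<open>auto simp: r_def\<close>)
  have r_zero: "\<forall>i<j. hder a b i r c = 0" if "j \<le> k" for j
    using that
  proof (induction j)
    case (Suc j)
    then have "hder a b j (\<lambda>x. r x * f x) c = hder a b j r c * f c"
      using hder_mult_at_zero[OF ab r f _ c] km by simp
    moreover have "hder a b j p c = 0" using zo Suc.prems unfolding zero_order_def by simp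
    ultimately have "hder a b j r c = 0" using p_eq[of j] nz c by simp
    then show ?case using Suc less_Suc_eq by auto
  qed simp
  have "hder a b k (\<lambda>x. r x * f x) c = hder a b k r c * f c"
    using hder_mult_at_zero[OF ab r f km c r_zero[OF order.refl]] by simp
  then have "hder a b k r c = hder a b k p c / f c"
    using p_eq[of k] nz c by (simp add: field_simps)
  then show ?thesis using r_zero[OF order.refl] unfolding r_def by simp
qed

text \<open>By induction on the order: the i-th derivative at c of the combination
  only sees the coefficients of functions of order at most i.\<close>
lemma sum_coeffs_vanish_below_order:
  fixes v :: "nat \<Rightarrow> real \<Rightarrow> 'a::real_normed_field"
  assumes ab: "a < b" and v: "\<forall>j\<le>m. Cm_on m a b (v j)" and ord: "inj_on ord {..m}"
    and zo: "\<forall>j\<le>m. zero_order a b (v j) c (ord j)" and c: "c \<in> {a..b}" and tm: "t \<le> Suc m"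
    and vanish: "\<forall>i<t. hder a b i (\<lambda>x. \<Sum>j\<le>m. C j * v j x) c = 0"
  shows "\<forall>j\<le>m. ord j < t \<longrightarrow> C j = 0"
proof -
  have "\<forall>j\<le>m. ord j = i \<longrightarrow> i < t \<longrightarrow> C j = 0" for i
  proof (induction i rule: less_induct)
    case (less i)
    show ?case
    proof (intro allI impI)
      fix j assume j: "j \<le> m" "ord j = i" "i < t"
      have "0 = hder a b i (\<lambda>x. \<Sum>j\<le>m. C j * v j x) c" using vanish j by simp
      also have "\<dots> = (\<Sum>l\<le>m. C l * hder a b i (v l) c)"
        using Cm_on_sum[OF ab finite_atMost, where m=m and f=v and c=C] v j tm c by auto
      also have "\<dots> = C j * hder a b i (v j) c"
      proof (rule sum_eq_single)
        fix l assume l: "l \<in> {..m}" "l \<noteq> j"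
        then have "ord l \<noteq> i" using ord j inj_onD[of ord "{..m}" l j] by auto
        then show "C l * hder a b i (v l) c = 0"
          using less.IH[of "ord l"] zo l j unfolding zero_order_def by (cases "ord l < i") auto
      qed (use j in auto)
      finally show "C j = 0" using zo j unfolding zero_order_def by auto
    qed
  qed
  then show ?thesis by blast
qed

lemma hder_sum_at_order:
  fixes v :: "nat \<Rightarrow> real \<Rightarrow> 'a::real_normed_field"
  assumes ab: "a < b" and v: "\<forall>j\<le>m. Cm_on m a b (v j)" and ord: "inj_on ord {..m}"
    and zo: "\<forall>j\<le>m. zero_order a b (v j) c (ord j)" and c: "c \<in> {a..b}"
    and j0: "j0 \<le> m" "ord j0 = t" and tm: "t \<le> m"
    and vanish: "\<forall>i<t. hder a b i (\<lambda>x. \<Sum>j\<le>m. C j * v j x) c = 0"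
  shows "hder a b t (\<lambda>x. \<Sum>j\<le>m. C j * v j x) c = C j0 * hder a b t (v j0) c"
proof -
  have "hder a b t (\<lambda>x. \<Sum>j\<le>m. C j * v j x) c = (\<Sum>l\<le>m. C l * hder a b t (v l) c)"
    using Cm_on_sum[OF ab finite_atMost, where m=m and f=v and c=C] v tm c by auto
  also have "\<dots> = C j0 * hder a b t (v j0) c"
  proof (rule sum_eq_single)
    fix l assume l: "l \<in> {..m}" "l \<noteq> j0"
    then have "ord l \<noteq> t" using ord j0 inj_onD[of ord "{..m}" l j0] by auto
    moreover have "C l = 0" if "ord l < t"
      using sum_coeffs_vanish_below_order[OF ab v ord zo c _ vanish] tm l that by auto
    ultimately show "C l * hder a b t (v l) c = 0"
      using zo l unfolding zero_order_def by (cases "ord l < t") auto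
  qed (use j0 in auto)
  finally show ?thesis .
qed

lemma has_vector_derivative_monomial:
  "((\<lambda>t. of_real ((t - c) ^ Suc k / fact (Suc k)) :: 'a::real_normed_field) has_vector_derivative
     of_real ((t - c) ^ k / fact k)) (at t within S)"
proof -
  have "((\<lambda>t. (t - c) ^ Suc k / fact (Suc k)) has_real_derivative (t - c) ^ k / fact k) (at t within S)"
    by (auto intro!: derivative_eq_intros simp del: power_Suc)
  then show ?thesis by (rule has_vector_derivative_of_real)
qed

lemma norm_diff_le_segment_bound:
  fixes \<phi> :: "real \<Rightarrow> 'a::real_normed_vector"
  assumes S: "closed_segment c x \<subseteq> S"
    and \<phi>': "\<And>t. t \<in> S \<Longrightarrow> (\<phi> has_vector_derivative \<phi>' t) (at t within S)"
    and bound: "\<And>t. t \<in> closed_segment c x \<Longrightarrow> norm (\<phi>' t) \<le> B"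
  shows "norm (\<phi> x - \<phi> c) \<le> B * \<bar>x - c\<bar>"
proof -
  have "norm (\<phi> x - \<phi> c) \<le> B * norm (x - c)"
  proof (rule differentiable_bound[where f'="\<lambda>t u. u *\<^sub>R \<phi>' t"])
    fix t assume t: "t \<in> closed_segment c x"
    show "(\<phi> has_derivative (\<lambda>u. u *\<^sub>R \<phi>' t)) (at t within closed_segment c x)"
      using has_vector_derivative_within_subset[OF \<phi>' S] t S
      by (auto simp: has_vector_derivative_def)
    show "onorm (\<lambda>u. u *\<^sub>R \<phi>' t) \<le> B"
      using onorm_scaleR_left[OF bounded_linear_ident, of "\<phi>' t"] bound[OF t]
      by (simp add: onorm_id)
  qed auto
  then show ?thesis by simp
qed

lemma Cm_on_taylor_at_zero:
  fixes h :: "real \<Rightarrow> 'a::real_normed_field"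
  assumes ab: "a < b"
  shows "Cm_on m a b h \<Longrightarrow> k \<le> m \<Longrightarrow> c \<in> {a..b} \<Longrightarrow> \<forall>j<k. hder a b j h c = 0 \<Longrightarrow> \<epsilon> > 0 \<Longrightarrow>
    \<exists>\<delta>>0. \<forall>x\<in>{a..b}. \<bar>x - c\<bar> < \<delta> \<longrightarrow>
       norm (h x - of_real ((x - c) ^ k / fact k) * hder a b k h c) \<le> \<epsilon> * \<bar>x - c\<bar> ^ k"
proof (induction k arbitrary: h m)
  case 0
  then have "continuous_on {a..b} h" unfolding Cm_on_def by (metis hder.simps(1) le0)
  then obtain \<delta> where "\<delta> > 0" "\<forall>x\<in>{a..b}. dist x c < \<delta> \<longrightarrow> dist (h x) (h c) < \<epsilon>"
    using 0 unfolding continuous_on_iff by blast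
  then show ?case
    by (intro exI[of _ \<delta>]) (auto simp: dist_norm intro: less_imp_le)
next
  case (Suc k)
  obtain m' where m': "m = Suc m'" using Suc.prems(2) by (cases m) auto
  have h: "Cm_on (Suc m') a b h" using Suc.prems(1) m' by simp
  have c: "c \<in> {a..b}" by (fact Suc.prems(3))
  define D where "D = hder a b (Suc k) h c"
  have "k \<le> m'" using Suc.prems(2) m' by simp
  moreover have "\<forall>j<k. hder a b j (hder a b 1 h) c = 0"
    using Suc.prems(4) by (simp add: hder_Suc_inner[symmetric])
  ultimately obtain \<delta> where \<delta>: "\<delta> > 0" and h'_taylor: "\<forall>x\<in>{a..b}. \<bar>x - c\<bar> < \<delta> \<longrightarrow>
       norm (hder a b 1 h x - of_real ((x - c) ^ k / fact k) * D) \<le> \<epsilon> * \<bar>x - c\<bar> ^ k"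
    using Suc.IH[OF Cm_on_hder1[OF h] _ c _ Suc.prems(5)]
    unfolding D_def hder_Suc_inner by blast
  define \<phi> where "\<phi> t = h t - of_real ((t - c) ^ Suc k / fact (Suc k)) * D" for t
  define \<phi>' where "\<phi>' t = hder a b 1 h t - of_real ((t - c) ^ k / fact k) * D" for t
  have \<phi>': "(\<phi> has_vector_derivative \<phi>' t) (at t within {a..b})" if "t \<in> {a..b}" for t
    unfolding \<phi>_def \<phi>'_def
    by (intro has_vector_derivative_diff Cm_on_has_vector_derivative[OF h that]
        has_vector_derivative_mult_left has_vector_derivative_monomial)
  have "h c = 0" using Suc.prems(4) by (metis hder.simps(1) zero_less_Suc)
  then have \<phi>_c: "\<phi> c = 0" by (simp add: \<phi>_def)
  show ?case
  proof (intro exI[of _ \<delta>] conjI \<delta> ballI impI)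
    fix x assume x: "x \<in> {a..b}" and "\<bar>x - c\<bar> < \<delta>"
    have S: "closed_segment c x \<subseteq> {a..b}" using closed_segment_subset[OF c x] by simp
    have "norm (\<phi> x - \<phi> c) \<le> (\<epsilon> * \<bar>x - c\<bar> ^ k) * \<bar>x - c\<bar>"
    proof (rule norm_diff_le_segment_bound[OF S \<phi>'])
      fix t assume t: "t \<in> closed_segment c x"
      then have "t \<in> {a..b}" using S by auto
      have tc: "\<bar>t - c\<bar> \<le> \<bar>x - c\<bar>"
        using dist_in_closed_segment[OF t] by (simp add: dist_real_def abs_minus_commute)
      then have "norm (\<phi>' t) \<le> \<epsilon> * \<bar>t - c\<bar> ^ k"
        using h'_taylor \<open>t \<in> {a..b}\<close> \<open>\<bar>x - c\<bar> < \<delta>\<close> unfolding \<phi>'_def by auto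
      also have "\<dots> \<le> \<epsilon> * \<bar>x - c\<bar> ^ k"
        using tc Suc.prems(5) by (intro mult_left_mono power_mono) auto
      finally show "norm (\<phi>' t) \<le> \<epsilon> * \<bar>x - c\<bar> ^ k" .
    qed
    then show "norm (h x - of_real ((x - c) ^ Suc k / fact (Suc k)) * hder a b (Suc k) h c)
        \<le> \<epsilon> * \<bar>x - c\<bar> ^ Suc k"
      using \<phi>_c unfolding \<phi>_def D_def by (simp add: mult_ac)
  qed
qed

lemma hder_at_zero_order_limit:
  fixes h :: "real \<Rightarrow> 'a::real_normed_field"
  assumes ab: "a < b" and h: "Cm_on m a b h" and km: "k \<le> m" and zo: "zero_order a b h c k"
    and endpoint: "(c = a \<and> \<sigma> = 1) \<or> (c = b \<and> \<sigma> = -1)"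
  shows "((\<lambda>t. of_real (fact k / (\<sigma> * t) ^ k) * h (c + \<sigma> * t)) \<longlongrightarrow> hder a b k h c) (at_right 0)"
proof (rule tendstoI)
  fix \<epsilon> :: real assume "\<epsilon> > 0"
  define D where "D = hder a b k h c"
  have c: "c \<in> {a..b}" and \<sigma>: "\<bar>\<sigma>\<bar> = 1" using endpoint ab by auto
  obtain \<delta> where \<delta>: "\<delta> > 0" and taylor: "\<forall>x\<in>{a..b}. \<bar>x - c\<bar> < \<delta> \<longrightarrow>
      norm (h x - of_real ((x - c) ^ k / fact k) * D) \<le> \<epsilon> / (2 * fact k) * \<bar>x - c\<bar> ^ k"
    using Cm_on_taylor_at_zero[OF ab h km c _, of "\<epsilon> / (2 * fact k)"] zo \<open>\<epsilon> > 0\<close>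
    unfolding zero_order_def D_def by auto
  have "dist (of_real (fact k / (\<sigma> * t) ^ k) * h (c + \<sigma> * t)) D < \<epsilon>"
    if t: "0 < t" "t < min \<delta> (b - a)" for t
  proof -
    have x: "c + \<sigma> * t \<in> {a..b}"
      using endpoint t by auto
    have "\<sigma> * t \<noteq> 0" using \<sigma> t by auto
    then have "of_real (fact k / (\<sigma> * t) ^ k) * h (c + \<sigma> * t) - D
        = of_real (fact k / (\<sigma> * t) ^ k) * (h (c + \<sigma> * t) - of_real ((\<sigma> * t) ^ k / fact k) * D)"
      by (simp add: algebra_simps flip: of_real_mult)
    moreover have "\<bar>fact k / (\<sigma> * t) ^ k\<bar> = fact k / t ^ k"
      using \<sigma> t by (simp add: abs_mult power_abs)
    ultimately have "dist (of_real (fact k / (\<sigma> * t) ^ k) * h (c + \<sigma> * t)) D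
        = fact k / t ^ k * norm (h (c + \<sigma> * t) - of_real ((\<sigma> * t) ^ k / fact k) * D)"
      by (simp only: dist_norm norm_mult norm_of_real)
    also have "\<dots> \<le> fact k / t ^ k * (\<epsilon> / (2 * fact k) * t ^ k)"
      using taylor[rule_format, OF x] t \<sigma> unfolding add_diff_cancel_left' abs_mult
      by (intro mult_left_mono) auto
    also have "\<dots> < \<epsilon>" using t \<open>\<epsilon> > 0\<close> by simp
    finally show ?thesis .
  qed
  then show "\<forall>\<^sub>F t in at_right 0. dist (of_real (fact k / (\<sigma> * t) ^ k) * h (c + \<sigma> * t)) (hder a b k h c) < \<epsilon>"
    unfolding eventually_at_right_field D_def using \<delta> ab by (intro exI[of _ "min \<delta> (b - a)"]) auto
qed

text \<open>The k-th derivative is the limit of k! h(c + \<sigma> t) / (\<sigma> t)^k, whose values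
  near c have the sign of \<sigma>^k.\<close>
lemma hder_at_zero_order_sign:
  fixes h :: "real \<Rightarrow> 'a::real_normed_field"
  assumes ab: "a < b" and h: "Cm_on m a b h" and km: "k \<le> m" and zo: "zero_order a b h c k"
    and endpoint: "(c = a \<and> \<sigma> = 1) \<or> (c = b \<and> \<sigma> = -1)"
    and nonneg: "\<exists>d>0. \<forall>x\<in>{a..b}. \<bar>x - c\<bar> < d \<longrightarrow> (\<exists>r\<ge>0. h x = of_real r)"
  shows "\<exists>r>0. hder a b k h c = of_real (\<sigma> ^ k * r)"
proof -
  define g where "g t = of_real (fact k / (\<sigma> * t) ^ k) * h (c + \<sigma> * t)" for t
  have \<sigma>: "\<bar>\<sigma>\<bar> = 1" "\<sigma> ^ k * \<sigma> ^ k = 1"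
    using endpoint by (auto simp flip: power_mult_distrib)
  obtain d where d: "d > 0" "\<forall>x\<in>{a..b}. \<bar>x - c\<bar> < d \<longrightarrow> (\<exists>r\<ge>0. h x = of_real r)"
    using nonneg by blast
  have g_lim: "(g \<longlongrightarrow> hder a b k h c) (at_right 0)"
    unfolding g_def by (rule hder_at_zero_order_limit[OF ab h km zo endpoint])
  have "g t = of_real (\<sigma> ^ k * norm (g t))" if t: "0 < t" "t < min d (b - a)" for t
  proof -
    have "c + \<sigma> * t \<in> {a..b}" "\<bar>c + \<sigma> * t - c\<bar> < d" using endpoint t by auto
    then obtain r where r: "r \<ge> 0" "h (c + \<sigma> * t) = of_real r" using d by blast
    have "fact k / (\<sigma> * t) ^ k * r = \<sigma> ^ k * \<bar>fact k / (\<sigma> * t) ^ k * r\<bar>"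
      using \<sigma> t r by (simp add: abs_mult power_abs power_mult_distrib field_simps)
    moreover have "g t = of_real (fact k / (\<sigma> * t) ^ k * r)"
      unfolding g_def r(2) of_real_mult ..
    ultimately show ?thesis
      by (metis norm_of_real)
  qed
  then have "\<forall>\<^sub>F t in at_right 0. of_real (\<sigma> ^ k * norm (g t)) = g t"
    unfolding eventually_at_right_field using d ab by (intro exI[of _ "min d (b - a)"]) auto
  then have "((\<lambda>t. of_real (\<sigma> ^ k * norm (g t))) \<longlongrightarrow> hder a b k h c) (at_right 0)"
    using g_lim tendsto_cong by fast
  moreover have "((\<lambda>t. of_real (\<sigma> ^ k * norm (g t))) \<longlongrightarrow> (of_real (\<sigma> ^ k * norm (hder a b k h c)) :: 'a)) (at_right 0)"
    by (intro tendsto_intros g_lim)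
  ultimately have "hder a b k h c = of_real (\<sigma> ^ k * norm (hder a b k h c))"
    using tendsto_unique trivial_limit_at_right_real by blast
  moreover have "norm (hder a b k h c) > 0" using zo unfolding zero_order_def by simp
  ultimately show ?thesis by blast
qed

section \<open>Families of functions compared on a set\<close>

definition restrict0 :: "'b set \<Rightarrow> ('b \<Rightarrow> 'a::zero) \<Rightarrow> 'b \<Rightarrow> 'a" where
  "restrict0 S f x = (if x \<in> S then f x else 0)"

interpretation fun_space: vector_space "\<lambda>(c::'a::field) (f::'b \<Rightarrow> 'a) x. c * f x"
  by unfold_locales (auto simp: fun_eq_iff algebra_simps)

lemma inj_on_restrict0_if_independent:
  fixes w :: "nat \<Rightarrow> 'b \<Rightarrow> 'a::field"
  assumes w_indep: "\<And>c. \<forall>x\<in>S. (\<Sum>k\<le>m. c k * w k x) = 0 \<Longrightarrow> \<forall>k\<le>m. c k = 0"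
  shows "inj_on (\<lambda>k. restrict0 S (w k)) {..m}"
proof (rule inj_onI, rule ccontr)
  fix i j assume ij: "i \<in> {..m}" "j \<in> {..m}" "restrict0 S (w i) = restrict0 S (w j)" "i \<noteq> j"
  define c where "c k = (if k = i then 1 else if k = j then -1 else (0::'a))" for k
  have "(\<Sum>k\<le>m. c k * w k x) = (\<Sum>k\<in>{i, j}. c k * w k x)" for x
    using ij by (intro sum.mono_neutral_right) (auto simp: c_def)
  then have "(\<Sum>k\<le>m. c k * w k x) = w i x - w j x" for x
    using ij by (simp add: c_def)
  moreover have "w i x = w j x" if "x \<in> S" for x
    using fun_cong[OF ij(3), of x] that by (simp add: restrict0_def)
  ultimately show False
    using w_indep[of c] ij by (auto simp: c_def)
qed

lemma independent_restrict0_if_independent: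
  fixes w :: "nat \<Rightarrow> 'b \<Rightarrow> 'a::field"
  assumes w_indep: "\<And>c. \<forall>x\<in>S. (\<Sum>k\<le>m. c k * w k x) = 0 \<Longrightarrow> \<forall>k\<le>m. c k = 0"
  shows "fun_space.independent ((\<lambda>k. restrict0 S (w k)) ` {..m})"
proof (rule fun_space.independent_if_scalars_zero)
  let ?W = "(\<lambda>k. restrict0 S (w k)) ` {..m}"
  fix c u assume sum0: "(\<Sum>v\<in>?W. (\<lambda>x. c v * v x)) = 0" and u: "u \<in> ?W"
  have "\<forall>x\<in>S. (\<Sum>k\<le>m. c (restrict0 S (w k)) * w k x) = 0"
  proof
    fix x assume "x \<in> S"
    have "0 = (\<Sum>v\<in>?W. c v * v x)"
      using fun_cong[OF sum0, of x] by (simp add: sum_fun_apply)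
    also have "\<dots> = (\<Sum>k\<le>m. c (restrict0 S (w k)) * restrict0 S (w k) x)"
      by (simp add: sum.reindex[OF inj_on_restrict0_if_independent[OF w_indep]])
    finally show "(\<Sum>k\<le>m. c (restrict0 S (w k)) * w k x) = 0"
      using \<open>x \<in> S\<close> by (simp add: restrict0_def)
  qed
  with w_indep[of "\<lambda>k. c (restrict0 S (w k))"] u show "c u = 0" by auto
qed simp

text \<open>Steinitz exchange in the space of functions modulo equality on S.\<close>
lemma independent_family_spans:
  fixes e w :: "nat \<Rightarrow> 'b \<Rightarrow> 'a::field"
  assumes w_indep: "\<And>c. \<forall>x\<in>S. (\<Sum>k\<le>m. c k * w k x) = 0 \<Longrightarrow> \<forall>k\<le>m. c k = 0"
    and w_in_span: "\<And>j. j \<le> m \<Longrightarrow> \<exists>c. \<forall>x\<in>S. w j x = (\<Sum>k\<le>m. c k * e k x)"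
    and k: "k \<le> m"
  shows "\<exists>c. \<forall>x\<in>S. e k x = (\<Sum>j\<le>m. c j * w j x)"
proof -
  define E where "E = (\<lambda>k. restrict0 S (e k)) ` {..m}"
  define W where "W = (\<lambda>k. restrict0 S (w k)) ` {..m}"
  note inj_W = inj_on_restrict0_if_independent[OF w_indep]
  have "W \<subseteq> fun_space.span E"
  proof
    fix u assume "u \<in> W"
    then obtain j where j: "j \<le> m" "u = restrict0 S (w j)" unfolding W_def by auto
    obtain c where c: "\<forall>x\<in>S. w j x = (\<Sum>k\<le>m. c k * e k x)" using w_in_span[OF j(1)] by blast
    have "u = (\<Sum>k\<le>m. (\<lambda>x. c k * restrict0 S (e k) x))"
      by (rule ext) (auto simp: j(2) restrict0_def sum_fun_apply c)
    also have "\<dots> \<in> fun_space.span E"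
      by (intro fun_space.span_sum fun_space.span_scale fun_space.span_base) (auto simp: E_def)
    finally show "u \<in> fun_space.span E" .
  qed
  have "restrict0 S (e k) \<in> fun_space.span W"
  proof (rule ccontr)
    assume e_notin: "restrict0 S (e k) \<notin> fun_space.span W"
    then have "fun_space.independent (insert (restrict0 S (e k)) W)"
      using independent_restrict0_if_independent[OF w_indep] fun_space.independent_insertI
      unfolding W_def by blast
    moreover have "insert (restrict0 S (e k)) W \<subseteq> fun_space.span E"
      using \<open>W \<subseteq> fun_space.span E\<close> k by (auto simp: E_def intro!: fun_space.span_base)
    ultimately have "card (insert (restrict0 S (e k)) W) \<le> card E"
      using fun_space.independent_span_bound[of E] by (auto simp: E_def)
    moreover have "card E \<le> Suc m" unfolding E_def using card_image_le[of "{..m}"] by simp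
    moreover have "card W = Suc m" unfolding W_def using card_image[OF inj_W] by simp
    moreover have "restrict0 S (e k) \<notin> W" using e_notin fun_space.span_base by blast
    ultimately show False by (simp add: W_def)
  qed
  then obtain c where c: "restrict0 S (e k) = (\<Sum>v\<in>W. (\<lambda>x. c v * v x))"
    using fun_space.span_finite[of W] by (auto simp: W_def)
  have "e k x = (\<Sum>j\<le>m. c (restrict0 S (w j)) * w j x)" if "x \<in> S" for x
  proof -
    have "e k x = (\<Sum>v\<in>W. c v * v x)"
      using fun_cong[OF c, of x] that by (simp add: restrict0_def sum_fun_apply W_def)
    also have "\<dots> = (\<Sum>j\<le>m. c (restrict0 S (w j)) * restrict0 S (w j) x)"
      unfolding W_def by (simp add: sum.reindex[OF inj_W])
    finally show ?thesis using that by (simp add: restrict0_def)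
  qed
  then show ?thesis by (intro exI[of _ "\<lambda>j. c (restrict0 S (w j))"]) blast
qed

lemma Cm_subspace_dim_independent_spans:
  fixes w :: "nat \<Rightarrow> real \<Rightarrow> 'a::real_normed_field"
  assumes V: "Cm_subspace_dim m a b V" and w: "\<forall>j\<le>m. w j \<in> V"
    and w_indep: "\<And>c. \<forall>x\<in>{a..b}. (\<Sum>j\<le>m. c j * w j x) = 0 \<Longrightarrow> \<forall>j\<le>m. c j = 0"
    and f: "f \<in> V"
  shows "\<exists>c. \<forall>x\<in>{a..b}. f x = (\<Sum>j\<le>m. c j * w j x)"
proof -
  obtain e :: "nat \<Rightarrow> real \<Rightarrow> 'a" where e_span: "\<forall>f\<in>V. \<exists>c. \<forall>x\<in>{a..b}. f x = (\<Sum>k\<le>m. c k * e k x)"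
    using V unfolding Cm_subspace_dim_def by blast
  have "\<forall>k\<in>{..m}. \<exists>d. \<forall>x\<in>{a..b}. e k x = (\<Sum>j\<le>m. d j * w j x)"
  proof
    fix k assume k: "k \<in> {..m}"
    show "\<exists>d. \<forall>x\<in>{a..b}. e k x = (\<Sum>j\<le>m. d j * w j x)"
      by (rule independent_family_spans[OF w_indep]) (use e_span w k in auto)
  qed
  from bchoice[OF this] obtain d
    where d: "\<forall>k\<in>{..m}. \<forall>x\<in>{a..b}. e k x = (\<Sum>j\<le>m. d k j * w j x)" ..
  obtain c where c: "\<forall>x\<in>{a..b}. f x = (\<Sum>k\<le>m. c k * e k x)"
    using e_span f by blast
  have "f x = (\<Sum>j\<le>m. (\<Sum>k\<le>m. c k * d k j) * w j x)" if "x \<in> {a..b}" for x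
  proof -
    have "f x = (\<Sum>k\<le>m. c k * (\<Sum>j\<le>m. d k j * w j x))"
      using c d that by simp
    also have "\<dots> = (\<Sum>k\<le>m. \<Sum>j\<le>m. c k * d k j * w j x)"
      by (simp add: sum_distrib_left mult.assoc)
    also have "\<dots> = (\<Sum>j\<le>m. \<Sum>k\<le>m. c k * d k j * w j x)"
      by (rule sum.swap)
    also have "\<dots> = (\<Sum>j\<le>m. (\<Sum>k\<le>m. c k * d k j) * w j x)"
      by (simp add: sum_distrib_right)
    finally show ?thesis .
  qed
  then show ?thesis by (intro exI[of _ "\<lambda>j. \<Sum>k\<le>m. c k * d k j"]) blast
qed

section \<open>Bernstein bases and the quotient derivative\<close>

lemma loc_nonneg_near_endpoint:
  assumes "loc_nonneg m a b p" "k \<le> m" "c = a \<or> c = b"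
  shows "\<exists>d>0. \<forall>x\<in>{a..b}. \<bar>x - c\<bar> < d \<longrightarrow> (\<exists>r\<ge>0. p k x = of_real r)"
proof -
  obtain d where "d > 0" "\<forall>k\<le>m. \<forall>x\<in>{a..b}. (x < a + d \<or> b - d < x) \<longrightarrow> (\<exists>r\<ge>0. p k x = of_real r)"
    using assms(1) unfolding loc_nonneg_def by blast
  then show ?thesis
    using assms(2,3) by (intro exI[of _ d]) auto
qed

lemma bernstein_basis_hder_pos_at_left:
  assumes ab: "a < b" and V: "\<forall>f\<in>V. Cm_on m a b f"
    and p: "bernstein_basis m a b V p" "loc_nonneg m a b p" and k: "k \<le> m"
  shows "\<exists>r>0. hder a b k (p k) a = of_real r"
proof -
  have "Cm_on m a b (p k)" "zero_order a b (p k) a k"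
    using p(1) V k unfolding bernstein_basis_def by auto
  from hder_at_zero_order_sign[OF ab this(1) k this(2) _ loc_nonneg_near_endpoint[OF p(2) k], of 1]
  show ?thesis by simp
qed

lemma bernstein_basis_hder_sign_at_right:
  assumes ab: "a < b" and V: "\<forall>f\<in>V. Cm_on m a b f"
    and p: "bernstein_basis m a b V p" "loc_nonneg m a b p" and k: "k \<le> m"
  shows "\<exists>r>0. hder a b (m - k) (p k) b = of_real ((-1) ^ (m - k) * r)"
proof -
  have "Cm_on m a b (p k)" "zero_order a b (p k) b (m - k)"
    using p(1) V k unfolding bernstein_basis_def by auto
  from hder_at_zero_order_sign[OF ab this(1) _ this(2) _ loc_nonneg_near_endpoint[OF p(2) k], of "-1"]
  show ?thesis by simp
qed

lemma Dquot_Cm_on: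
  assumes ab: "a < b" and V: "\<forall>f\<in>V. Cm_on (Suc m) a b f"
    and f0: "Cm_on (Suc m) a b f0" "\<forall>x\<in>{a..b}. f0 x \<noteq> 0" and g: "g \<in> Dquot a b f0 V"
  shows "Cm_on m a b g"
  using g Cm_on_hder1[OF Cm_on_divide[OF ab _ f0]] V unfolding Dquot_def by auto

text \<open>The setting of the theorem with n = Suc m.\<close>
locale bernstein_quotient =
  fixes a b :: real and m :: nat
    and U :: "(real \<Rightarrow> 'a::real_normed_field) set"
    and p q :: "nat \<Rightarrow> real \<Rightarrow> 'a" and f0 :: "real \<Rightarrow> 'a"
  assumes ab: "a < b"
    and U: "Cm_subspace_dim (Suc m) a b U"
    and p: "bernstein_basis (Suc m) a b U p" "loc_nonneg (Suc m) a b p"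
    and f0_in_U: "f0 \<in> U" and f0_pos: "\<forall>x\<in>{a..b}. \<exists>r>0. f0 x = of_real r"
    and q: "bernstein_basis m a b (Dquot a b f0 U) q" "loc_nonneg m a b q"
begin

definition dquot :: "(real \<Rightarrow> 'a) \<Rightarrow> real \<Rightarrow> 'a" where
  "dquot f = hder a b 1 (\<lambda>x. f x / f0 x)"

lemma U_Cm_on: "f \<in> U \<Longrightarrow> Cm_on (Suc m) a b f"
  using U unfolding Cm_subspace_dim_def by blast

lemma f0_nonzero: "\<forall>x\<in>{a..b}. f0 x \<noteq> 0"
  using f0_pos by fastforce

lemma quot_Cm_on: "f \<in> U \<Longrightarrow> Cm_on (Suc m) a b (\<lambda>x. f x / f0 x)"
  using Cm_on_divide[OF ab U_Cm_on U_Cm_on[OF f0_in_U] f0_nonzero] .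

lemma p_in_U: "k \<le> Suc m \<Longrightarrow> p k \<in> U"
  using p(1) unfolding bernstein_basis_def by blast

lemma p_zero_orders: "k \<le> Suc m \<Longrightarrow> zero_order a b (p k) a k \<and> zero_order a b (p k) b (Suc m - k)"
  using p(1) unfolding bernstein_basis_def by blast

lemma p_Cm_on: "k \<le> Suc m \<Longrightarrow> Cm_on (Suc m) a b (p k)"
  using p(1) U_Cm_on unfolding bernstein_basis_def by blast

lemma Dquot_U_Cm_on: "\<forall>g\<in>Dquot a b f0 U. Cm_on m a b g"
  using Dquot_Cm_on[OF ab _ U_Cm_on[OF f0_in_U] f0_nonzero] U_Cm_on by blast

lemma q_Cm_on: "j \<le> m \<Longrightarrow> Cm_on m a b (q j)"
  using q(1) Dquot_U_Cm_on unfolding bernstein_basis_def by blast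

lemma q_zero_orders: "j \<le> m \<Longrightarrow> zero_order a b (q j) a j \<and> zero_order a b (q j) b (m - j)"
  using q(1) unfolding bernstein_basis_def by blast

lemma q_independent:
  assumes "\<forall>x\<in>{a..b}. (\<Sum>j\<le>m. C j * q j x) = 0"
  shows "\<forall>j\<le>m. C j = 0"
proof -
  have "hder a b i (\<lambda>x. \<Sum>j\<le>m. C j * q j x) a = hder a b i (\<lambda>x. 0) a" for i
    using assms ab by (intro hder_cong_on) auto
  moreover have "hder a b i (\<lambda>x. 0) a = (0::'a)" for i
    using Cm_on_const[OF ab, of i "0::'a"] ab by auto
  ultimately have "\<forall>i<Suc m. hder a b i (\<lambda>x. \<Sum>j\<le>m. C j * q j x) a = 0"
    by simp
  then have "\<forall>j\<le>m. id j < Suc m \<longrightarrow> C j = 0"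
    by (intro sum_coeffs_vanish_below_order[OF ab _ _ _ _ order.refl])
      (use q_Cm_on q_zero_orders ab in auto)
  then show ?thesis by simp
qed

lemma dquot_cong: "\<forall>x\<in>{a..b}. f x = g x \<Longrightarrow> x \<in> {a..b} \<Longrightarrow> dquot f x = dquot g x"
  unfolding dquot_def using f0_nonzero by (intro hder_cong_on) auto

lemma dquot_sum:
  fixes g :: "nat \<Rightarrow> real \<Rightarrow> 'a"
  assumes "\<forall>j\<le>M. g j \<in> U" "x \<in> {a..b}"
  shows "dquot (\<lambda>x. \<Sum>j\<le>M. c j * g j x) x = (\<Sum>j\<le>M. c j * dquot (g j) x)"
proof -
  have "dquot (\<lambda>x. \<Sum>j\<le>M. c j * g j x) x = hder a b 1 (\<lambda>x. \<Sum>j\<le>M. c j * (g j x / f0 x)) x"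
    unfolding dquot_def using assms(2) by (intro hder_cong_on) (auto simp: sum_divide_distrib)
  also have "\<dots> = (\<Sum>j\<le>M. c j * dquot (g j) x)"
    using Cm_on_sum[OF ab finite_atMost, where f="\<lambda>j x. g j x / f0 x" and m="Suc m" and c=c]
      quot_Cm_on assms unfolding dquot_def by auto
  finally show ?thesis .
qed

lemma dquot_f0: "x \<in> {a..b} \<Longrightarrow> dquot f0 x = 0"
proof -
  assume x: "x \<in> {a..b}"
  have "dquot f0 x = hder a b 1 (\<lambda>x. 1) x"
    unfolding dquot_def using f0_nonzero x by (intro hder_cong_on) auto
  then show ?thesis using Cm_on_const[OF ab, of 1 "1::'a"] x by auto
qed

text \<open>Choosing H_j \<in> U with dquot H_j = q_j, the functions H_0, ..., H_m, f0 form a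
  basis of U, and dquot kills f0.\<close>
lemma dquot_in_span_q:
  assumes f: "f \<in> U"
  shows "\<exists>C. \<forall>x\<in>{a..b}. dquot f x = (\<Sum>j\<le>m. C j * q j x)"
proof -
  have "\<forall>j\<in>{..m}. \<exists>H. H \<in> U \<and> q j = dquot H"
    using q(1) unfolding bernstein_basis_def Dquot_def dquot_def by auto
  from bchoice[OF this] obtain H where H: "\<forall>j\<le>m. H j \<in> U \<and> q j = dquot (H j)" by auto
  define w where "w j = (if j \<le> m then H j else f0)" for j
  have w: "\<forall>j\<le>Suc m. w j \<in> U" using H f0_in_U by (simp add: w_def)
  have dquot_w_sum: "dquot (\<lambda>x. \<Sum>j\<le>Suc m. c j * w j x) x = (\<Sum>j\<le>m. c j * q j x)"
    if "x \<in> {a..b}" for c x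
    using dquot_sum[OF w that] H dquot_f0[OF that] by (simp add: w_def)
  have w_indep: "\<forall>j\<le>Suc m. c j = 0" if c: "\<forall>x\<in>{a..b}. (\<Sum>j\<le>Suc m. c j * w j x) = 0" for c
  proof -
    have "\<forall>x\<in>{a..b}. (\<Sum>j\<le>m. c j * q j x) = 0"
    proof
      fix x assume x: "x \<in> {a..b}"
      have "dquot (\<lambda>x. \<Sum>j\<le>Suc m. c j * w j x) x = dquot (\<lambda>x. \<Sum>j\<le>Suc m. 0 * w j x) x"
        using c x by (intro dquot_cong) auto
      then show "(\<Sum>j\<le>m. c j * q j x) = 0"
        using dquot_w_sum[OF x, of c] dquot_w_sum[OF x, of "\<lambda>_. 0"] by simp
    qed
    then have c_le_m: "\<forall>j\<le>m. c j = 0" by (rule q_independent)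
    then have "(\<Sum>j\<le>Suc m. c j * w j a) = c (Suc m) * f0 a" by (simp add: w_def)
    then have "c (Suc m) * f0 a = 0" using c ab by simp
    then show ?thesis using c_le_m f0_nonzero ab le_Suc_eq by auto
  qed
  obtain c where c: "\<forall>x\<in>{a..b}. f x = (\<Sum>j\<le>Suc m. c j * w j x)"
    using Cm_subspace_dim_independent_spans[OF U w w_indep f] by blast
  have "dquot f x = (\<Sum>j\<le>m. c j * q j x)" if "x \<in> {a..b}" for x
    using dquot_cong[OF c that] dquot_w_sum[OF that] by simp
  then show ?thesis by blast
qed

definition dcoeff :: "nat \<Rightarrow> nat \<Rightarrow> 'a" where
  "dcoeff k = (SOME C. \<forall>x\<in>{a..b}. dquot (p k) x = (\<Sum>j\<le>m. C j * q j x))"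

lemma dquot_p_expansion: "k \<le> Suc m \<Longrightarrow> \<forall>x\<in>{a..b}. dquot (p k) x = (\<Sum>j\<le>m. dcoeff k j * q j x)"
  unfolding dcoeff_def by (rule someI_ex[OF dquot_in_span_q[OF p_in_U]])

lemma hder_dcoeff_sum:
  assumes "k \<le> Suc m" "c \<in> {a..b}"
  shows "hder a b i (\<lambda>x. \<Sum>j\<le>m. dcoeff k j * q j x) c = hder a b (Suc i) (\<lambda>x. p k x / f0 x) c"
  unfolding hder_Suc_inner dquot_def[symmetric]
  using dquot_p_expansion[OF assms(1)] assms(2) by (intro hder_cong_on) auto

lemma hder_quot_p_at_left:
  "k \<le> Suc m \<Longrightarrow> (\<forall>j<k. hder a b j (\<lambda>x. p k x / f0 x) a = 0) \<and>
     hder a b k (\<lambda>x. p k x / f0 x) a = hder a b k (p k) a / f0 a"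
  using hder_divide_at_zero_order[OF ab p_Cm_on U_Cm_on[OF f0_in_U] f0_nonzero _ _
      p_zero_orders[THEN conjunct1]] ab
  by auto

lemma hder_quot_p_at_right:
  "k \<le> Suc m \<Longrightarrow> (\<forall>j<Suc m - k. hder a b j (\<lambda>x. p k x / f0 x) b = 0) \<and>
     hder a b (Suc m - k) (\<lambda>x. p k x / f0 x) b = hder a b (Suc m - k) (p k) b / f0 b"
  using hder_divide_at_zero_order[OF ab p_Cm_on U_Cm_on[OF f0_in_U] f0_nonzero diff_le_self _
      p_zero_orders[THEN conjunct2]] ab
  by auto

lemma dcoeff_eq_0_below:
  assumes k: "k \<le> Suc m" and j: "j \<le> m" "Suc j < k"
  shows "dcoeff k j = 0"
proof -
  have "\<forall>i<k - 1. hder a b i (\<lambda>x. \<Sum>j\<le>m. dcoeff k j * q j x) a = 0"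
    using hder_dcoeff_sum[OF k] hder_quot_p_at_left[OF k] ab by auto
  then have "\<forall>j\<le>m. id j < k - 1 \<longrightarrow> dcoeff k j = 0"
    by (intro sum_coeffs_vanish_below_order[OF ab _ _ _ _ _]) (use q_Cm_on q_zero_orders ab k in auto)
  then show ?thesis using j by auto
qed

lemma dcoeff_eq_0_above:
  assumes k: "k \<le> Suc m" and j: "j \<le> m" "k < j"
  shows "dcoeff k j = 0"
proof -
  have "\<forall>i<m - k. hder a b i (\<lambda>x. \<Sum>j\<le>m. dcoeff k j * q j x) b = 0"
    using hder_dcoeff_sum[OF k] hder_quot_p_at_right[OF k] ab by auto
  then have "\<forall>j\<le>m. m - j < m - k \<longrightarrow> dcoeff k j = 0"
    by (intro sum_coeffs_vanish_below_order[OF ab _ inj_on_diff_atMost _ _ _])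
      (use q_Cm_on q_zero_orders ab k in auto)
  then show ?thesis using j by auto
qed

lemma dcoeff_subdiag_pos:
  assumes k: "1 \<le> k" "k \<le> Suc m"
  shows "\<exists>r>0. dcoeff k (k - 1) = of_real r"
proof -
  have k': "k - 1 \<le> m" using k by simp
  have vanish: "\<forall>i<k - 1. hder a b i (\<lambda>x. \<Sum>j\<le>m. dcoeff k j * q j x) a = 0"
    using hder_dcoeff_sum[OF k(2)] hder_quot_p_at_left[OF k(2)] ab by auto
  have "dcoeff k (k - 1) * hder a b (k - 1) (q (k - 1)) a
      = hder a b (k - 1) (\<lambda>x. \<Sum>j\<le>m. dcoeff k j * q j x) a"
    by (rule hder_sum_at_order[symmetric, OF ab _ inj_on_id _ _ k' _ k' vanish])
      (use q_Cm_on q_zero_orders ab in auto)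
  also have "\<dots> = hder a b k (p k) a / f0 a"
    using hder_dcoeff_sum[OF k(2), of a "k - 1"] hder_quot_p_at_left[OF k(2)] ab k by simp
  finally have eq: "dcoeff k (k - 1) * hder a b (k - 1) (q (k - 1)) a = hder a b k (p k) a / f0 a" .
  obtain r1 where r1: "r1 > 0" "hder a b k (p k) a = of_real r1"
    using bernstein_basis_hder_pos_at_left[OF ab _ p k(2)] U_Cm_on by blast
  obtain r2 where r2: "r2 > 0" "f0 a = of_real r2"
    using f0_pos[rule_format, of a] ab by auto
  obtain r3 where r3: "r3 > 0" "hder a b (k - 1) (q (k - 1)) a = of_real r3"
    using bernstein_basis_hder_pos_at_left[OF ab Dquot_U_Cm_on q k'] by blast
  have "dcoeff k (k - 1) * of_real r3 = of_real (r1 / r2)"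
    using eq unfolding r1(2) r2(2) r3(2) of_real_divide .
  then have "dcoeff k (k - 1) = of_real (r1 / r2 / r3)"
    by (rule mult_of_real_eq_of_real_iff[THEN iffD1, rotated]) (use r3 in simp)
  then show ?thesis using r1 r2 r3 by (intro exI[of _ "r1 / r2 / r3"]) simp
qed

lemma dcoeff_diag_neg:
  assumes k: "k \<le> m"
  shows "\<exists>r>0. dcoeff k k = - of_real r"
proof -
  have k': "k \<le> Suc m" using k by simp
  have vanish: "\<forall>i<m - k. hder a b i (\<lambda>x. \<Sum>j\<le>m. dcoeff k j * q j x) b = 0"
    using hder_dcoeff_sum[OF k'] hder_quot_p_at_right[OF k'] ab by auto
  have "dcoeff k k * hder a b (m - k) (q k) b = hder a b (m - k) (\<lambda>x. \<Sum>j\<le>m. dcoeff k j * q j x) b"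
    by (rule hder_sum_at_order[symmetric, OF ab _ inj_on_diff_atMost _ _ k _ _ vanish])
      (use q_Cm_on q_zero_orders ab in auto)
  also have "\<dots> = hder a b (Suc m - k) (p k) b / f0 b"
    using hder_dcoeff_sum[OF k', of b "m - k"] hder_quot_p_at_right[OF k'] ab k
    by (simp add: Suc_diff_le)
  finally have eq: "dcoeff k k * hder a b (m - k) (q k) b = hder a b (Suc m - k) (p k) b / f0 b" .
  obtain r1 where r1: "r1 > 0" "hder a b (Suc m - k) (p k) b = of_real ((-1) ^ (Suc m - k) * r1)"
    using bernstein_basis_hder_sign_at_right[OF ab _ p k'] U_Cm_on by blast
  obtain r2 where r2: "r2 > 0" "f0 b = of_real r2"
    using f0_pos[rule_format, of b] ab by auto
  obtain r3 where r3: "r3 > 0" "hder a b (m - k) (q k) b = of_real ((-1) ^ (m - k) * r3)"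
    using bernstein_basis_hder_sign_at_right[OF ab Dquot_U_Cm_on q k] by blast
  have "dcoeff k k * of_real ((-1) ^ (m - k) * r3) = of_real ((-1) ^ (Suc m - k) * r1 / r2)"
    using eq unfolding r1(2) r2(2) r3(2) of_real_divide .
  then have "dcoeff k k = of_real ((-1) ^ (Suc m - k) * r1 / r2 / ((-1) ^ (m - k) * r3))"
    by (rule mult_of_real_eq_of_real_iff[THEN iffD1, rotated]) (use r3 in simp)
  also have "(-1) ^ (Suc m - k) * r1 / r2 / ((-1) ^ (m - k) * r3) = - (r1 / r2 / r3)"
    using k r3(1) by (simp add: Suc_diff_le)
  finally show ?thesis using r1 r2 r3 by (intro exI[of _ "r1 / r2 / r3"]) simp
qed

lemma bernstein_coeffs_recurrence:
  assumes \<beta>: "\<forall>x\<in>{a..b}. f0 x = (\<Sum>k\<le>Suc m. \<beta> k * p k x)" and j: "j \<le> m"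
  shows "\<beta> j * dcoeff j j + \<beta> (Suc j) * dcoeff (Suc j) j = 0"
proof -
  have "\<forall>x\<in>{a..b}. (\<Sum>j\<le>m. (\<Sum>k\<le>Suc m. \<beta> k * dcoeff k j) * q j x) = 0"
  proof
    fix x assume x: "x \<in> {a..b}"
    have "(\<Sum>j\<le>m. (\<Sum>k\<le>Suc m. \<beta> k * dcoeff k j) * q j x)
        = (\<Sum>j\<le>m. \<Sum>k\<le>Suc m. \<beta> k * (dcoeff k j * q j x))"
      by (simp only: sum_distrib_right mult.assoc)
    also have "\<dots> = (\<Sum>k\<le>Suc m. \<Sum>j\<le>m. \<beta> k * (dcoeff k j * q j x))"
      by (rule sum.swap)
    also have "\<dots> = (\<Sum>k\<le>Suc m. \<beta> k * (\<Sum>j\<le>m. dcoeff k j * q j x))"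
      by (simp only: sum_distrib_left)
    also have "\<dots> = (\<Sum>k\<le>Suc m. \<beta> k * dquot (p k) x)"
      using dquot_p_expansion x by simp
    also have "\<dots> = dquot (\<lambda>x. \<Sum>k\<le>Suc m. \<beta> k * p k x) x"
      using dquot_sum[OF _ x, of "Suc m" p \<beta>] p_in_U by simp
    also have "\<dots> = dquot f0 x"
      using \<beta> x by (intro dquot_cong) auto
    finally show "(\<Sum>j\<le>m. (\<Sum>k\<le>Suc m. \<beta> k * dcoeff k j) * q j x) = 0"
      using dquot_f0[OF x] by simp
  qed
  from q_independent[OF this] have coeff_q_j: "(\<Sum>k\<le>Suc m. \<beta> k * dcoeff k j) = 0"
    using j by blast
  have "dcoeff k j = 0" if "k \<le> Suc m" "k \<noteq> j" "k \<noteq> Suc j" for k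
    using dcoeff_eq_0_below[OF that(1) j] dcoeff_eq_0_above[OF that(1) j] that
    by (cases "k < j") auto
  then have "(\<Sum>k\<le>Suc m. \<beta> k * dcoeff k j) = (\<Sum>k\<in>{j, Suc j}. \<beta> k * dcoeff k j)"
    using j by (intro sum.mono_neutral_right) auto
  then show ?thesis using coeff_q_j by simp
qed

lemma bernstein_coeff_0_pos:
  assumes \<beta>: "\<forall>x\<in>{a..b}. f0 x = (\<Sum>k\<le>Suc m. \<beta> k * p k x)"
  shows "\<exists>r>0. \<beta> 0 = of_real r"
proof -
  have "p k a = 0" if "0 < k" "k \<le> Suc m" for k
    using p_zero_orders[OF that(2)] that(1) unfolding zero_order_def by (metis hder.simps(1))
  then have "(\<Sum>k\<le>Suc m. \<beta> k * p k a) = \<beta> 0 * p 0 a"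
    by (intro sum_eq_single) auto
  then have "f0 a = \<beta> 0 * p 0 a"
    using \<beta> ab by auto
  moreover obtain r1 where "r1 > 0" "p 0 a = of_real r1"
    using bernstein_basis_hder_pos_at_left[OF ab _ p, of 0] U_Cm_on by auto
  moreover obtain r2 where "r2 > 0" "f0 a = of_real r2"
    using f0_pos[rule_format, of a] ab by auto
  ultimately have "\<beta> 0 = of_real (r2 / r1)"
    using mult_of_real_eq_of_real_iff[of r1 "\<beta> 0" r2] by simp
  then show ?thesis using \<open>r1 > 0\<close> \<open>r2 > 0\<close> by (intro exI[of _ "r2 / r1"]) simp
qed

lemma bernstein_coeffs_pos:
  assumes \<beta>: "\<forall>x\<in>{a..b}. f0 x = (\<Sum>k\<le>Suc m. \<beta> k * p k x)"
  shows "k \<le> Suc m \<Longrightarrow> \<exists>r>0. \<beta> k = of_real r"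
proof (induction k)
  case 0
  show ?case by (rule bernstein_coeff_0_pos[OF \<beta>])
next
  case (Suc j)
  then obtain r where r: "r > 0" "\<beta> j = of_real r" by auto
  obtain c1 where c1: "c1 > 0" "dcoeff (Suc j) j = of_real c1"
    using dcoeff_subdiag_pos[of "Suc j"] Suc.prems by auto
  obtain c2 where c2: "c2 > 0" "dcoeff j j = - of_real c2"
    using dcoeff_diag_neg[of j] Suc.prems by auto
  have "\<beta> (Suc j) * of_real c1 = of_real (r * c2)"
    using bernstein_coeffs_recurrence[OF \<beta>, of j] Suc.prems r c1 c2
    by (simp add: algebra_simps add_eq_0_iff)
  then have "\<beta> (Suc j) = of_real (r * c2 / c1)"
    by (rule mult_of_real_eq_of_real_iff[THEN iffD1, rotated]) (use c1 in simp)
  then show ?case using r c1 c2 by (intro exI[of _ "r * c2 / c1"]) simp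
qed

end

theorem theorem7:
  fixes a b :: real and n :: nat
    and U :: "(real \<Rightarrow> 'a::real_normed_field) set"
    and p q :: "nat \<Rightarrow> real \<Rightarrow> 'a" and f0 :: "real \<Rightarrow> 'a" and \<beta> :: "nat \<Rightarrow> 'a"
  assumes "a < b" and "1 \<le> n"
    and "Cm_subspace_dim n a b U"
    and "bernstein_basis n a b U p" and "loc_nonneg n a b p"
    and "f0 \<in> U" and "\<forall>x\<in>{a..b}. \<exists>r>0. f0 x = of_real r"
    and "bernstein_basis (n - 1) a b (Dquot a b f0 U) q" and "loc_nonneg (n - 1) a b q"
    and "\<forall>x\<in>{a..b}. f0 x = (\<Sum>k\<le>n. \<beta> k * p k x)"
  shows "\<forall>k\<le>n. \<exists>r>0. \<beta> k = of_real r"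
proof -
  have n: "n = Suc (n - 1)" using \<open>1 \<le> n\<close> by simp
  interpret bernstein_quotient a b "n - 1" U p q f0
    by unfold_locales (use assms in \<open>simp_all flip: n\<close>)
  show ?thesis
    using bernstein_coeffs_pos assms(10) by (simp flip: n)
qed

end
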